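(* Let $\mathcal{R}$ be a cell space with finite stabiliser $G_0$, let $A$ be a finite subset of $M$, and let $\mathfrak{g}\in G/G_0$. Then $|(\cdot\triangleleft\mathfrak{g})^{-1}(A)|\leq|G_0|\cdot|A|$.
   Context: A cell space $\mathcal{R}$ consists of a group $G$ acting transitively on the left on a nonempty set $M$ via $\triangleright$, a point $m_0\in M$ and a family $(g_{m_0,m})_{m\in M}$ in $G$ with $g_{m_0,m}\triangleright m_0=m$. $G_0$ is the stabiliser of $m_0$ and $G/G_0$ the set of left cosets. The right semi-action $\triangleleft\colon M\times G/G_0\to M$ is $m\triangleleft gG_0=g_{m_0,m}g\triangleright m_0$, and $(\cdot\triangleleft\mathfrak{g})^{-1}(A)=\{m\in M: m\triangleleft\mathfrak{g}\in A\}$. *)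

theory Defs
  imports "HOL-Algebra.Group_Action"
begin

definition cell_space ::
  "('a, 'c) monoid_scheme \<Rightarrow> 'b set \<Rightarrow> ('a \<Rightarrow> 'b \<Rightarrow> 'b) \<Rightarrow> 'b \<Rightarrow> ('b \<Rightarrow> 'a) \<Rightarrow> bool" where
  "cell_space G M phi m0 gf \<longleftrightarrow>
     transitive_action G M phi \<and> M \<noteq> {} \<and> m0 \<in> M \<and>
     (\<forall>m \<in> M. gf m \<in> carrier G \<and> phi (gf m) m0 = m)"

definition G0 :: "('a, 'c) monoid_scheme \<Rightarrow> ('a \<Rightarrow> 'b \<Rightarrow> 'b) \<Rightarrow> 'b \<Rightarrow> 'a set" where
  "G0 G phi m0 = stabilizer G phi m0"

definition left_cosets_G0 :: "('a, 'c) monoid_scheme \<Rightarrow> ('a \<Rightarrow> 'b \<Rightarrow> 'b) \<Rightarrow> 'b \<Rightarrow> 'a set set" where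
  "left_cosets_G0 G phi m0 = {g <#\<^bsub>G\<^esub> G0 G phi m0 | g. g \<in> carrier G}"

text \<open>The right semi-action m \<triangleleft> gG0 = (gf m \<otimes> g) \<triangleright> m0, computed with a chosen
  representative g of the coset (the value does not depend on the choice).\<close>
definition semi_act ::
  "('a, 'c) monoid_scheme \<Rightarrow> ('a \<Rightarrow> 'b \<Rightarrow> 'b) \<Rightarrow> 'b \<Rightarrow> ('b \<Rightarrow> 'a) \<Rightarrow> 'b \<Rightarrow> 'a set \<Rightarrow> 'b" where
  "semi_act G phi m0 gf m cs =
     phi (gf m \<otimes>\<^bsub>G\<^esub> (SOME g. g \<in> carrier G \<and> cs = g <#\<^bsub>G\<^esub> G0 G phi m0)) m0"

definition semi_act_preimage ::
  "('a, 'c) monoid_scheme \<Rightarrow> 'b set \<Rightarrow> ('a \<Rightarrow> 'b \<Rightarrow> 'b) \<Rightarrow> 'b \<Rightarrow> ('b \<Rightarrow> 'a) \<Rightarrow> 'a set \<Rightarrow> 'b set \<Rightarrow> 'b set" where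
  "semi_act_preimage G M phi m0 gf cs A = {m \<in> M. semi_act G phi m0 gf m cs \<in> A}"

end

theory Submission
  imports Defs
begin

text \<open>Each fibre of \<open>(\<cdot> \<triangleleft> gG\<^sub>0)\<close> is carried injectively by \<open>m \<mapsto> g\<^sub>m g\<close> into the set of group
  elements moving \<open>m\<^sub>0\<close> to a given point, which is a left coset of the stabiliser \<open>G\<^sub>0\<close>. Hence
  each fibre has at most \<open>|G\<^sub>0|\<close> elements and the preimage of \<open>A\<close> at most \<open>|G\<^sub>0| \<cdot> |A|\<close>.\<close>

sublocale group_action \<subseteq> group G
  using group_hom group_hom.axioms(1) by blast

lemma (in group) bij_betw_l_coset:
  assumes "H \<subseteq> carrier G" "a \<in> carrier G"
  shows "bij_betw ((\<otimes>) a) H (a <# H)"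
  unfolding bij_betw_def
  using inj_on_subset[OF inj_on_cmult assms(1)] assms(2) by (auto simp: l_coset_def)

lemma (in group_action) transporter_eq_l_coset:
  assumes x: "x \<in> E" and k: "k \<in> carrier G"
  shows "{g \<in> carrier G. \<phi> g x = \<phi> k x} = k <# stabilizer G \<phi> x"
proof
  show "{g \<in> carrier G. \<phi> g x = \<phi> k x} \<subseteq> k <# stabilizer G \<phi> x"
  proof
    fix g assume "g \<in> {g \<in> carrier G. \<phi> g x = \<phi> k x}"
    then have g: "g \<in> carrier G" "\<phi> g x = \<phi> k x" by auto
    have "\<phi> (inv k \<otimes> g) x = \<phi> (inv k) (\<phi> k x)"
      using composition_rule[OF x inv_closed[OF k] g(1)] g(2) by simp
    also have "\<dots> = x"
      using orbit_sym_aux[OF k x refl] .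
    finally have "inv k \<otimes> g \<in> stabilizer G \<phi> x"
      using g k by (simp add: stabilizer_def)
    moreover have "g = k \<otimes> (inv k \<otimes> g)"
      using g k by (simp add: m_assoc[symmetric])
    ultimately show "g \<in> k <# stabilizer G \<phi> x"
      unfolding l_coset_def by blast
  qed
  show "k <# stabilizer G \<phi> x \<subseteq> {g \<in> carrier G. \<phi> g x = \<phi> k x}"
    using composition_rule[OF x k] k unfolding l_coset_def stabilizer_def by auto
qed

lemma (in transitive_action) card_transporter_set:
  assumes x: "x \<in> E" and A: "A \<subseteq> E" "finite A" and fin: "finite (stabilizer G \<phi> x)"
  shows "finite {g \<in> carrier G. \<phi> g x \<in> A}"
    and "card {g \<in> carrier G. \<phi> g x \<in> A} = card (stabilizer G \<phi> x) * card A"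
proof -
  have fibre: "finite {g \<in> carrier G. \<phi> g x = a} \<and>
      card {g \<in> carrier G. \<phi> g x = a} = card (stabilizer G \<phi> x)" if a: "a \<in> A" for a
  proof -
    obtain k where k: "k \<in> carrier G" "\<phi> k x = a"
      using unique_orbit[OF x] a A by (meson subsetD)
    have bij: "bij_betw ((\<otimes>) k) (stabilizer G \<phi> x) {g \<in> carrier G. \<phi> g x = a}"
      using bij_betw_l_coset[OF stabilizer_subset k(1)] transporter_eq_l_coset[OF x k(1)] k(2)
      by simp
    show ?thesis
      using bij_betw_finite[OF bij] bij_betw_same_card[OF bij] fin by simp
  qed
  have eq: "{g \<in> carrier G. \<phi> g x \<in> A} = (\<Union>a\<in>A. {g \<in> carrier G. \<phi> g x = a})"
    by blast
  show "finite {g \<in> carrier G. \<phi> g x \<in> A}"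
    unfolding eq using A(2) fibre by (simp add: finite_UN)
  have "card (\<Union>a\<in>A. {g \<in> carrier G. \<phi> g x = a}) = (\<Sum>a\<in>A. card {g \<in> carrier G. \<phi> g x = a})"
    by (rule card_UN_disjoint[OF A(2)]) (use fibre in auto)
  also have "\<dots> = (\<Sum>a\<in>A. card (stabilizer G \<phi> x))"
    using fibre by simp
  finally show "card {g \<in> carrier G. \<phi> g x \<in> A} = card (stabilizer G \<phi> x) * card A"
    unfolding eq by simp
qed

lemma (in transitive_action) card_section_translate_preimage_le:
  assumes x: "x \<in> E" and s: "\<forall>y\<in>E. s y \<in> carrier G \<and> \<phi> (s y) x = y"
    and A: "A \<subseteq> E" "finite A" and fin: "finite (stabilizer G \<phi> x)" and g: "g \<in> carrier G"
  shows "finite {y \<in> E. \<phi> (s y \<otimes> g) x \<in> A}"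
    and "card {y \<in> E. \<phi> (s y \<otimes> g) x \<in> A} \<le> card (stabilizer G \<phi> x) * card A"
proof -
  let ?P = "{y \<in> E. \<phi> (s y \<otimes> g) x \<in> A}"
  let ?T = "{h \<in> carrier G. \<phi> h x \<in> A}"
  have "inj_on (\<lambda>y. s y \<otimes> g) ?P"
  proof
    fix y y' assume "y \<in> ?P" "y' \<in> ?P" "s y \<otimes> g = s y' \<otimes> g"
    then have "s y = s y'"
      using s g right_cancel by auto
    with \<open>y \<in> ?P\<close> \<open>y' \<in> ?P\<close> show "y = y'"
      using s by (metis (no_types, lifting) mem_Collect_eq)
  qed
  moreover have "(\<lambda>y. s y \<otimes> g) ` ?P \<subseteq> ?T"
    using s g by auto
  moreover note card_transporter_set[OF x A fin]
  ultimately show "finite ?P" "card ?P \<le> card (stabilizer G \<phi> x) * card A"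
    using card_inj_on_le[of "\<lambda>y. s y \<otimes> g" ?P ?T] finite_subset[of "(\<lambda>y. s y \<otimes> g) ` ?P" ?T]
      finite_imageD[of "\<lambda>y. s y \<otimes> g" ?P] by auto
qed

lemma semi_act_by_representative:
  assumes "cs \<in> left_cosets_G0 G phi m0"
  obtains g where "g \<in> carrier G" and "\<And>m. semi_act G phi m0 gf m cs = phi (gf m \<otimes>\<^bsub>G\<^esub> g) m0"
proof -
  define g where "g = (SOME g. g \<in> carrier G \<and> cs = g <#\<^bsub>G\<^esub> G0 G phi m0)"
  have "\<exists>g. g \<in> carrier G \<and> cs = g <#\<^bsub>G\<^esub> G0 G phi m0"
    using assms unfolding left_cosets_G0_def by blast
  then have "g \<in> carrier G"
    unfolding g_def by (rule someI2_ex) blast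
  then show ?thesis
    using that unfolding semi_act_def g_def by blast
qed

theorem corollary1:
  fixes G :: "('a, 'c) monoid_scheme" and M :: "'b set" and phi :: "'a \<Rightarrow> 'b \<Rightarrow> 'b"
    and m0 :: 'b and gf :: "'b \<Rightarrow> 'a" and A :: "'b set" and cs :: "'a set"
  assumes "cell_space G M phi m0 gf"
    and "finite (G0 G phi m0)"
    and "A \<subseteq> M" and "finite A"
    and "cs \<in> left_cosets_G0 G phi m0"
  shows "finite (semi_act_preimage G M phi m0 gf cs A) \<and>
         card (semi_act_preimage G M phi m0 gf cs A) \<le> card (G0 G phi m0) * card A"
proof -
  interpret transitive_action G M phi
    using assms(1) unfolding cell_space_def by blast
  have m0: "m0 \<in> M" and gf: "\<forall>m\<in>M. gf m \<in> carrier G \<and> phi (gf m) m0 = m"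
    using assms(1) unfolding cell_space_def by auto
  obtain g where g: "g \<in> carrier G"
    and act: "\<And>m. semi_act G phi m0 gf m cs = phi (gf m \<otimes>\<^bsub>G\<^esub> g) m0"
    using semi_act_by_representative[OF assms(5)] by blast
  have "semi_act_preimage G M phi m0 gf cs A = {m \<in> M. phi (gf m \<otimes>\<^bsub>G\<^esub> g) m0 \<in> A}"
    unfolding semi_act_preimage_def act ..
  then show ?thesis
    using card_section_translate_preimage_le[OF m0 gf assms(3,4) _ g] assms(2)
    unfolding G0_def by simp
qed

end
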